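(* Let $q$ be a prime power and $n \ge 1$. For any function $\varphi : M_n(\mathbb{F}_q) \to \mathbb{R}$ of von Mangoldt type with coefficients $(c_\sigma)_{\sigma \in S_n}$, \[ \sum_{f \in M_n(\mathbb{F}_q)} \varphi(f) = \sum_{\sigma \in S_n} c_\sigma\, q^n. \]
   Context: $M_n(\mathbb{F}_q)$ is the set of monic degree-$n$ polynomials in $\mathbb{F}_q[x]$. For $(z_1,\dots,z_n) \in \overline{\mathbb{F}}_q^{\,n}$ and $\sigma \in S_n$, $\delta_\sigma(z_1,\dots,z_n) = 1$ if $\mathrm{Frob}_q(z_1,\dots,z_n) = \sigma(z_1,\dots,z_n)$ (Frobenius $z \mapsto z^q$ applied coordinatewise equals the permutation $\sigma$ of coordinates) and $0$ otherwise. $\varphi$ is of von Mangoldt type with coefficients $(c_\sigma)$ if $\varphi(f) = \sum_{(z_1,\dots,z_n) \in \overline{\mathbb{F}}_q^{\,n},\, f = \prod_i (x - z_i)} \sum_{\sigma \in S_n} c_\sigma \delta_\sigma(z_1,\dots,z_n)$ for all $f \in M_n(\mathbb{F}_q)$. *)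

theory Defs
  imports "HOL-Algebra.Algebraic_Closure_Type" "HOL-Combinatorics.Permutations" "HOL-Library.FuncSet"
begin

text \<open>Finite field F_q is a type 'a of class finite field; q = card (UNIV :: 'a set).
  Its algebraic closure is the type 'a alg_closure, with embedding to_ac.\<close>

definition monic_polys :: "nat \<Rightarrow> ('a::{finite,field}) poly set" where
  "monic_polys n = {f. degree f = n \<and> lead_coeff f = 1}"

definition root_tuples :: "nat \<Rightarrow> ('a::{finite,field}) poly \<Rightarrow> (nat \<Rightarrow> 'a alg_closure) set" where
  "root_tuples n f = {z \<in> PiE {..<n} (\<lambda>_. UNIV).
      map_poly to_ac f = (\<Prod>i<n. [:- z i, 1:])}"

definition perm_tuple :: "nat \<Rightarrow> (nat \<Rightarrow> nat) \<Rightarrow> (nat \<Rightarrow> 'b) \<Rightarrow> (nat \<Rightarrow> 'b)" where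
  "perm_tuple n \<sigma> z = (\<lambda>j\<in>{..<n}. z (inv_into UNIV \<sigma> j))"

definition delta :: "nat \<Rightarrow> (nat \<Rightarrow> nat) \<Rightarrow> (nat \<Rightarrow> ('a::{finite,field}) alg_closure) \<Rightarrow> real" where
  "delta n \<sigma> z = (if (\<lambda>j\<in>{..<n}. z j ^ card (UNIV :: 'a set)) = perm_tuple n \<sigma> z then 1 else 0)"

definition von_mangoldt_type ::
  "nat \<Rightarrow> (('a::{finite,field}) poly \<Rightarrow> real) \<Rightarrow> ((nat \<Rightarrow> nat) \<Rightarrow> real) \<Rightarrow> bool" where
  "von_mangoldt_type n \<phi> c \<longleftrightarrow>
     (\<forall>f\<in>monic_polys n. \<phi> f =
        (\<Sum>z\<in>root_tuples n f. \<Sum>\<sigma>\<in>{\<sigma>. \<sigma> permutes {..<n}}. c \<sigma> * delta n \<sigma> z))"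

end

(*
  Exchanging the order of summation, it suffices to show that for every permutation sigma there
  are exactly q^n tuples z over the algebraic closure with z_j^q = z_(sigma^-1 j), each of them the
  root tuple of exactly one monic f over F_q. Since q is a power of the characteristic, x |-> x^q is
  a ring endomorphism of the closure; it permutes the linear factors of prod_j (x - z_j), so the
  coefficients of this product are fixed by it and therefore lie in F_q. To count the tuples, split
  {..<n} into the cycles of sigma: on a cycle of length L a tuple is determined by one coordinate,
  which can be any root of x^(q^L) - x, and this polynomial has derivative -1, hence q^L distinct
  roots.
*)

theory Submission
  imports Defs "HOL-Combinatorics.Orbits"
begin

section \<open>Finite fields\<close>

definition additively_closed :: "'a::monoid_add set \<Rightarrow> bool" where
  "additively_closed H \<longleftrightarrow> 0 \<in> H \<and> (\<forall>x\<in>H. \<forall>y\<in>H. x + y \<in> H)"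

lemma additively_closed_of_nat_mult:
  assumes "additively_closed H" "h \<in> H"
  shows "of_nat k * h \<in> (H :: 'a::ring_1 set)"
  using assms by (induction k) (auto simp: additively_closed_def distrib_right)

lemma additively_closed_cancel_multiple:
  fixes H :: "'a::ring_1 set"
  assumes H: "additively_closed H" and p: "prime CHAR('a)"
    and h: "h1 \<in> H" "h2 \<in> H" and d: "\<not> CHAR('a) dvd d"
    and eq: "h2 = h1 + of_nat d * x"
  shows "x \<in> H"
proof -
  define p where "p = CHAR('a)"
  have "coprime d p"
    using d p unfolding p_def by (metis coprime_commute prime_imp_coprime)
  moreover have "d \<noteq> 0" using d by (metis dvd_0_right)
  ultimately obtain a b where ab: "d * a = p * b + 1"
    using bezout_nat[of d p] by auto
  have "of_nat a * h2 = of_nat a * h1 + of_nat (d * a) * x"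
    by (simp add: eq algebra_simps)
  also have "of_nat (d * a) * x = x"
    by (simp add: ab p_def)
  \<comment> \<open>that is, \<open>x = a * (h2 - h1)\<close>, with the negation written additively\<close>
  finally have "x = of_nat a * h2 + of_nat ((p - 1) * a) * h1"
    using p prime_gt_0_nat[OF p] by (simp add: of_nat_diff p_def algebra_simps)
  moreover have "of_nat a * h2 \<in> H" "of_nat ((p - 1) * a) * h1 \<in> H"
    using H h by (simp_all only: additively_closed_of_nat_mult)
  ultimately show ?thesis
    using H by (simp add: additively_closed_def)
qed

lemma of_nat_mod_CHAR: "of_nat (m mod CHAR('a)) = (of_nat m :: 'a::semiring_1)"
proof -
  have "(of_nat m :: 'a) = of_nat (m mod CHAR('a) + CHAR('a) * (m div CHAR('a)))"
    by simp
  also have "\<dots> = of_nat (m mod CHAR('a))"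
    by (simp only: of_nat_add of_nat_mult of_nat_CHAR) simp
  finally show ?thesis ..
qed

lemma inj_on_additively_closed_extend:
  fixes H :: "'a::ring_1 set"
  assumes H: "additively_closed H" and p: "prime CHAR('a)" and x: "x \<notin> H"
  shows "inj_on (\<lambda>(h, i). h + of_nat i * x) (H \<times> {..<CHAR('a)})"
proof -
  have same_index: "i1 = i2"
    if "h1 + of_nat i1 * x = h2 + of_nat i2 * x" "i2 \<le> i1" "i1 < CHAR('a)" "h1 \<in> H" "h2 \<in> H"
    for h1 h2 i1 i2
  proof (rule ccontr)
    assume "i1 \<noteq> i2"
    with that(2,3) have "\<not> CHAR('a) dvd (i1 - i2)"
      by (auto dest: dvd_imp_le)
    moreover have "h2 = h1 + of_nat (i1 - i2) * x"
      using that(1,2) by (simp add: of_nat_diff algebra_simps)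
    ultimately have "x \<in> H"
      using additively_closed_cancel_multiple[OF H p that(4,5)] by blast
    with x show False ..
  qed
  show ?thesis
  proof (rule inj_onI, clarify)
    fix h1 i1 h2 i2
    assume *: "h1 \<in> H" "i1 < CHAR('a)" "h2 \<in> H" "i2 < CHAR('a)"
      "h1 + of_nat i1 * x = h2 + of_nat i2 * x"
    hence "i1 = i2"
      using same_index[of h1 i1 h2 i2] same_index[of h2 i2 h1 i1] by fastforce
    with * show "h1 = h2 \<and> i1 = i2"
      by simp
  qed
qed

lemma additively_closed_extend:
  fixes H :: "'a::ring_1 set"
  assumes H: "additively_closed H" and p: "prime CHAR('a)" and x: "x \<notin> H"
  defines "H' \<equiv> (\<lambda>(h, i). h + of_nat i * x) ` (H \<times> {..<CHAR('a)})"
  shows "additively_closed H'" "card H' = CHAR('a) * card H" "insert x H \<subseteq> H'"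
proof -
  have p2: "CHAR('a) \<ge> 2"
    using p by (rule prime_ge_2_nat)
  show "card H' = CHAR('a) * card H"
    using inj_on_additively_closed_extend[OF H p x]
    by (simp add: H'_def card_image card_cartesian_product)
  have mem_H': "h + of_nat i * x \<in> H'" if "h \<in> H" "i < CHAR('a)" for h i
    unfolding H'_def using that by (intro image_eqI[of _ _ "(h, i)"]) auto
  have "x \<in> H'"
    using mem_H'[of 0 1] H p2 by (simp add: additively_closed_def)
  moreover have "h \<in> H'" if "h \<in> H" for h
    using mem_H'[of h 0] that p2 by simp
  ultimately show "insert x H \<subseteq> H'"
    by blast
  show "additively_closed H'"
    unfolding additively_closed_def
  proof safe
    show "0 \<in> H'"
      using mem_H'[of 0 0] H p2 by (simp add: additively_closed_def)
  next
    fix y z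
    assume "y \<in> H'" "z \<in> H'"
    then obtain h1 i1 h2 i2 where *: "h1 \<in> H" "i1 < CHAR('a)" "h2 \<in> H" "i2 < CHAR('a)"
      and yz: "y = h1 + of_nat i1 * x" "z = h2 + of_nat i2 * x"
      unfolding H'_def by auto
    have "(h1 + of_nat i1 * x) + (h2 + of_nat i2 * x)
        = (h1 + h2) + of_nat ((i1 + i2) mod CHAR('a)) * x"
      by (simp add: of_nat_mod_CHAR algebra_simps)
    also have "\<dots> \<in> H'"
      using * H p2 by (intro mem_H') (auto simp: additively_closed_def)
    finally show "y + z \<in> H'"
      unfolding yz .
  qed
qed

lemma card_field_prime_power:
  "\<exists>k. card (UNIV :: 'a::{finite,field} set) = CHAR('a) ^ k"
proof -
  have p: "prime CHAR('a)"
    by (intro prime_CHAR_semidom finite_imp_CHAR_pos) simp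
  have power_from_subgroup: "\<exists>k. card (UNIV :: 'a set) = CHAR('a) ^ k"
    if "additively_closed H" "card H = CHAR('a) ^ j" for H :: "'a set" and j
    using that
  proof (induction "card (UNIV - H)" arbitrary: H j rule: less_induct)
    case less
    show ?case
    proof (cases "H = UNIV")
      case True
      with less.prems show ?thesis by auto
    next
      case False
      then obtain x where x: "x \<notin> H" by auto
      define H' where "H' = (\<lambda>(h, i). h + of_nat i * x) ` (H \<times> {..<CHAR('a)})"
      note H' = additively_closed_extend[OF less.prems(1) p x, folded H'_def]
      have "card (UNIV - H') < card (UNIV - H)"
        using H'(3) x by (intro psubset_card_mono) auto
      moreover have "card H' = CHAR('a) ^ Suc j"
        using H'(2) less.prems(2) by simp
      ultimately show ?thesis
        using less.hyps H'(1) by blast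
    qed
  qed
  show ?thesis
    by (rule power_from_subgroup[of "{0}" 0]) (simp_all add: additively_closed_def)
qed

lemma two_le_card_UNIV_field: "2 \<le> card (UNIV :: 'a::{finite,field} set)"
proof -
  have "card {0, 1 :: 'a} \<le> card (UNIV :: 'a set)"
    by (rule card_mono) simp_all
  thus ?thesis
    by simp
qed

lemma power_card_eq_self: "x ^ card (UNIV :: 'a set) = (x :: 'a::{finite,field})"
proof (cases "x = 0")
  case False
  define U where "U = UNIV - {0 :: 'a}"
  have "(\<Prod>y\<in>U. x * y) = (\<Prod>y\<in>U. y)"
    by (rule prod.reindex_bij_witness[of _ "\<lambda>y. y / x" "\<lambda>y. x * y"]) (use False in \<open>auto simp: U_def\<close>)
  hence "x ^ card U * \<Prod>U = \<Prod>U"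
    by (simp add: prod.distrib)
  moreover have "\<Prod>U \<noteq> 0"
    by (simp add: U_def)
  ultimately have "x ^ card U = 1"
    by simp
  moreover have "card (UNIV :: 'a set) = Suc (card U)"
    unfolding U_def using finite_UNIV_card_ge_0[where 'a='a] by (simp add: card_Diff_singleton)
  ultimately show ?thesis
    by simp
qed (use finite_UNIV_card_ge_0[where 'a='a] in simp)

lemma of_nat_card_eq_0: "of_nat (card (UNIV :: 'a set)) = (0 :: 'a::{finite,ring_1})"
proof -
  have "(\<Sum>y\<in>UNIV. y + 1) = (\<Sum>y\<in>UNIV. y :: 'a)"
    by (rule sum.reindex_bij_witness[of _ "\<lambda>y. y - 1" "\<lambda>y. y + 1"]) auto
  thus ?thesis
    by (simp add: sum.distrib)
qed

section \<open>Separable polynomials over algebraically closed fields\<close>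

lemma order_le_1_if_pderiv_nonzero:
  fixes p :: "'a::idom poly"
  assumes "poly (pderiv p) a \<noteq> 0"
  shows "order a p \<le> 1"
proof (rule ccontr)
  assume "\<not> order a p \<le> 1"
  moreover have "p \<noteq> 0"
    using assms by auto
  ultimately have "[:-a, 1:] ^ 2 dvd p"
    by (simp add: order_divides)
  then obtain r where "p = [:-a, 1:] ^ 2 * r"
    by (rule dvdE)
  hence "p = [:-a, 1:] * ([:-a, 1:] * r)"
    by (simp only: power2_eq_square mult.assoc)
  hence "pderiv p = [:-a, 1:] * pderiv ([:-a, 1:] * r) + ([:-a, 1:] * r) * pderiv [:-a, 1:]"
    by (simp only: pderiv_mult)
  hence "poly (pderiv p) a = 0"
    by simp
  with assms show False ..
qed

lemma size_proots_alg_closed: "size (proots p) = degree (p :: 'a::alg_closed_field poly)"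
proof (cases "p = 0")
  case False
  obtain A where A: "size A = degree p" "p = smult (lead_coeff p) (\<Prod>x\<in>#A. [:-x, 1:])"
    using alg_closed_imp_factorization[OF False] by blast
  have "proots p = proots (\<Prod>x\<in>#A. [:-x, 1:])"
    using False by (subst A(2)) simp
  also have "\<dots> = A"
  proof (induction A)
    case (add x A)
    have "(\<Prod>x\<in>#A. [:-x, 1:]) \<noteq> (0 :: 'a poly)"
      by (auto simp: prod_mset_zero_iff)
    hence "proots ([:-x, 1:] * (\<Prod>x\<in>#A. [:-x, 1:])) = add_mset x A"
      using add.IH by (subst proots_mult) simp_all
    thus ?case
      by (simp only: image_mset_add_mset prod_mset.add_mset)
  qed simp
  finally show ?thesis
    using A(1) by simp
qed simp

lemma card_roots_eq_degree_if_separable: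
  fixes p :: "'a::alg_closed_field poly"
  assumes "p \<noteq> 0" and separable: "\<And>x. poly p x = 0 \<Longrightarrow> poly (pderiv p) x \<noteq> 0"
  shows "card {x. poly p x = 0} = degree p"
proof -
  have "proots p = mset_set {x. poly p x = 0}"
  proof (rule multiset_eqI)
    fix x
    have "order x p = (if poly p x = 0 then 1 else 0)"
      using order_le_1_if_pderiv_nonzero[OF separable, of x] order_gt_0_iff[OF assms(1), of x]
      by (auto simp: order_0I)
    thus "count (proots p) x = count (mset_set {x. poly p x = 0}) x"
      using assms(1) poly_roots_finite[OF assms(1)] by simp
  qed
  thus ?thesis
    by (metis size_mset_set size_proots_alg_closed)
qed

lemma card_roots_X_power_minus_X:
  assumes "N \<ge> 2" and "of_nat N = (0 :: 'a::alg_closed_field)"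
  shows "card {x :: 'a. x ^ N = x} = N"
proof -
  define P :: "'a poly" where "P = monom 1 N + [:0, -1:]"
  have "degree P = N"
    unfolding P_def using assms(1) by (subst degree_add_eq_left) (auto simp: degree_monom_eq)
  moreover have "pderiv P = [:-1:]"
    using assms(2) by (simp add: P_def pderiv_monom pderiv_add pderiv_pCons)
  moreover have "poly P x = 0 \<longleftrightarrow> x ^ N = x" for x
    by (simp add: P_def poly_monom)
  ultimately show ?thesis
    using assms(1) card_roots_eq_degree_if_separable[of P] by fastforce
qed

section \<open>The Frobenius map on the algebraic closure\<close>

lemma map_poly_mult_hom:
  fixes \<phi> :: "'a::comm_semiring_1 \<Rightarrow> 'b::comm_semiring_1"
  assumes add: "\<And>x y. \<phi> (x + y) = \<phi> x + \<phi> y" and mult: "\<And>x y. \<phi> (x * y) = \<phi> x * \<phi> y"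
    and zero: "\<phi> 0 = 0"
  shows "map_poly \<phi> (p * q) = map_poly \<phi> p * map_poly \<phi> q"
proof -
  have sum: "\<phi> (sum g S) = (\<Sum>i\<in>S. \<phi> (g i))" for g :: "nat \<Rightarrow> 'a" and S
    by (induction S rule: infinite_finite_induct) (simp_all add: zero add)
  show ?thesis
    by (rule poly_eqI) (simp add: coeff_map_poly zero coeff_mult sum mult)
qed

lemma map_poly_prod_hom:
  fixes \<phi> :: "'a::comm_semiring_1 \<Rightarrow> 'b::comm_semiring_1"
  assumes "\<And>x y. \<phi> (x + y) = \<phi> x + \<phi> y" and "\<And>x y. \<phi> (x * y) = \<phi> x * \<phi> y"
    and "\<phi> 0 = 0" and "\<phi> 1 = 1"
  shows "map_poly \<phi> (\<Prod>i\<in>I. f i) = (\<Prod>i\<in>I. map_poly \<phi> (f i))"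
  by (induction I rule: infinite_finite_induct) (simp_all add: assms map_poly_mult_hom)

lemma frobenius_add_alg_closure:
  fixes x y :: "'a::{finite,field} alg_closure"
  shows "(x + y) ^ card (UNIV :: 'a set) = x ^ card (UNIV :: 'a set) + y ^ card (UNIV :: 'a set)"
proof -
  obtain k where "card (UNIV :: 'a set) = CHAR('a) ^ k"
    using card_field_prime_power by blast
  moreover have "prime CHAR('a)"
    by (intro prime_CHAR_semidom finite_imp_CHAR_pos) simp
  ultimately show ?thesis
    by (intro freshmans_dream'[where n = k]) simp_all
qed

lemma frobenius_map_poly_linear_factors:
  fixes w :: "'i \<Rightarrow> 'a::{finite,field} alg_closure"
  shows "map_poly (\<lambda>x. x ^ card (UNIV :: 'a set)) (\<Prod>i\<in>I. [:- w i, 1:])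
           = (\<Prod>i\<in>I. [:- (w i ^ card (UNIV :: 'a set)), 1:])"
proof -
  have q: "card (UNIV :: 'a set) > 0"
    using two_le_card_UNIV_field[where 'a = 'a] by simp
  have minus: "(- x) ^ card (UNIV :: 'a set) = - (x ^ card (UNIV :: 'a set))" for x :: "'a alg_closure"
    using frobenius_add_alg_closure[of x "- x"] q by (simp add: power_0_left eq_neg_iff_add_eq_0 add.commute)
  show ?thesis
    using q by (subst map_poly_prod_hom)
      (simp_all add: frobenius_add_alg_closure power_mult_distrib map_poly_pCons minus)
qed

lemma funpow_power: "((\<lambda>x. x ^ N) ^^ m) (x :: 'a::monoid_mult) = x ^ (N ^ m)"
  by (induction m) (simp_all flip: power_mult add: mult.commute)

lemma card_fixed_points_frobenius_power:
  assumes "m > 0"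
  shows "card {x :: 'a::{finite,field} alg_closure. x ^ (card (UNIV :: 'a set) ^ m) = x}
           = card (UNIV :: 'a set) ^ m"
proof (rule card_roots_X_power_minus_X)
  have "2 \<le> card (UNIV :: 'a set)"
    by (rule two_le_card_UNIV_field)
  also have "\<dots> \<le> card (UNIV :: 'a set) ^ m"
    using assms \<open>2 \<le> card (UNIV :: 'a set)\<close> by (intro self_le_power) auto
  finally show "2 \<le> card (UNIV :: 'a set) ^ m" .
  have "(of_nat (card (UNIV :: 'a set)) :: 'a alg_closure) = to_ac (of_nat (card (UNIV :: 'a set)))"
    by simp
  also have "\<dots> = 0"
    by (simp only: of_nat_card_eq_0 to_ac_0)
  finally show "(of_nat (card (UNIV :: 'a set) ^ m) :: 'a alg_closure) = 0"
    using assms by simp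
qed

lemma range_to_ac_eq_fixed_points:
  "range (to_ac :: 'a::{finite,field} \<Rightarrow> 'a alg_closure) = {x. x ^ card (UNIV :: 'a set) = x}"
proof (rule card_subset_eq)
  have "card {x :: 'a alg_closure. x ^ card (UNIV :: 'a set) = x} = card (UNIV :: 'a set)"
    using card_fixed_points_frobenius_power[of 1, where 'a = 'a] by simp
  moreover have card_range: "card (range (to_ac :: 'a \<Rightarrow> _)) = card (UNIV :: 'a set)"
    by (simp add: card_image inj_to_ac)
  ultimately show "card (range (to_ac :: 'a \<Rightarrow> _)) = card {x :: 'a alg_closure. x ^ card (UNIV :: 'a set) = x}"
    by simp
  thus "finite {x :: 'a alg_closure. x ^ card (UNIV :: 'a set) = x}"
    using two_le_card_UNIV_field[where 'a = 'a] card_range by (intro card_ge_0_finite) simp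
  show "range to_ac \<subseteq> {x :: 'a alg_closure. x ^ card (UNIV :: 'a set) = x}"
    by (auto simp flip: to_ac_power simp: power_card_eq_self)
qed

lemma frobenius_fixed_poly_descends:
  fixes P :: "'a::{finite,field} alg_closure poly"
  assumes "map_poly (\<lambda>x. x ^ card (UNIV :: 'a set)) P = P"
  shows "map_poly to_ac (map_poly of_ac P) = P"
proof (rule poly_eqI)
  fix k
  have "coeff P k ^ card (UNIV :: 'a set) = coeff P k"
    using arg_cong[OF assms, of "\<lambda>p. coeff p k"] two_le_card_UNIV_field[where 'a = 'a]
    by (simp add: coeff_map_poly power_0_left)
  hence "coeff P k \<in> range to_ac"
    by (simp add: range_to_ac_eq_fixed_points)
  thus "coeff (map_poly to_ac (map_poly of_ac P)) k = coeff P k"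
    by (simp add: coeff_map_poly to_ac_of_ac)
qed

section \<open>Maps intertwining a permutation with a self-map\<close>

definition intertwining_maps :: "'i set \<Rightarrow> ('i \<Rightarrow> 'i) \<Rightarrow> ('b \<Rightarrow> 'b) \<Rightarrow> ('i \<Rightarrow> 'b) set" where
  "intertwining_maps A \<tau> F = {z \<in> PiE A (\<lambda>_. UNIV). \<forall>j\<in>A. F (z j) = z (\<tau> j)}"

lemma intertwining_maps_cong:
  "(\<And>j. j \<in> A \<Longrightarrow> \<tau> j = \<tau>' j) \<Longrightarrow> intertwining_maps A \<tau> F = intertwining_maps A \<tau>' F"
  by (simp add: intertwining_maps_def)

lemma card_intertwining_maps_split:
  assumes "B \<subseteq> A" and "\<And>j. j \<in> B \<Longrightarrow> \<tau> j \<in> B" and "\<And>j. j \<in> A - B \<Longrightarrow> \<tau> j \<in> A - B"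
  shows "card (intertwining_maps A \<tau> F) = card (intertwining_maps B \<tau> F) * card (intertwining_maps (A - B) \<tau> F)"
proof -
  have "bij_betw (\<lambda>z. (restrict z B, restrict z (A - B))) (intertwining_maps A \<tau> F)
      (intertwining_maps B \<tau> F \<times> intertwining_maps (A - B) \<tau> F)"
  proof (rule bij_betw_byWitness[where f' = "\<lambda>(u, w) j. if j \<in> B then u j else w j"])
    show "\<forall>z\<in>intertwining_maps A \<tau> F.
        (\<lambda>(u, w) j. if j \<in> B then u j else w j) (restrict z B, restrict z (A - B)) = z"
      by (auto simp: intertwining_maps_def fun_eq_iff PiE_def extensional_def)
    show "\<forall>uw\<in>intertwining_maps B \<tau> F \<times> intertwining_maps (A - B) \<tau> F.
        (\<lambda>z. (restrict z B, restrict z (A - B))) ((\<lambda>(u, w) j. if j \<in> B then u j else w j) uw) = uw"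
      by (auto simp: intertwining_maps_def fun_eq_iff PiE_def extensional_def)
    show "(\<lambda>z. (restrict z B, restrict z (A - B))) ` intertwining_maps A \<tau> F
        \<subseteq> intertwining_maps B \<tau> F \<times> intertwining_maps (A - B) \<tau> F"
      using assms by (auto simp: intertwining_maps_def)
    show "(\<lambda>(u, w) j. if j \<in> B then u j else w j) ` (intertwining_maps B \<tau> F \<times> intertwining_maps (A - B) \<tau> F)
        \<subseteq> intertwining_maps A \<tau> F"
      using assms by (fastforce simp: intertwining_maps_def PiE_def extensional_def)
  qed
  thus ?thesis
    by (simp add: bij_betw_same_card card_cartesian_product)
qed

lemma funpow_orbit_eq_iff_mod_card:
  assumes "permutation \<tau>"
  shows "(\<tau> ^^ i) a = (\<tau> ^^ k) a \<longleftrightarrow> i mod card (orbit \<tau> a) = k mod card (orbit \<tau> a)"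
proof -
  define L where "L = funpow_dist1 \<tau> a a"
  have a: "a \<in> orbit \<tau> a"
    using assms by (rule permutation_self_in_orbit)
  have inj: "inj_on (\<lambda>n. (\<tau> ^^ n) a) {0..<L}"
    unfolding L_def using a by (rule inj_on_funpow_dist1)
  have card: "card (orbit \<tau> a) = L"
    unfolding orbit_conv_funpow_dist1[OF a] L_def[symmetric] using inj by (simp add: card_image)
  have reduce: "(\<tau> ^^ n) a = (\<tau> ^^ (n mod L)) a" for n
    using funpow_dist1_prop[OF a] by (simp add: L_def funpow_mod_eq)
  have "L > 0"
    by (simp add: L_def)
  have "(\<tau> ^^ i) a = (\<tau> ^^ k) a \<longleftrightarrow> (\<tau> ^^ (i mod L)) a = (\<tau> ^^ (k mod L)) a"
    by (simp only: reduce[symmetric])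
  also have "\<dots> \<longleftrightarrow> i mod L = k mod L"
    using inj_on_eq_iff[OF inj, of "i mod L" "k mod L"] \<open>L > 0\<close> by simp
  finally show ?thesis
    unfolding card .
qed

lemma intertwining_maps_funpow:
  assumes "z \<in> intertwining_maps A \<tau> F" and "a \<in> A" and "\<tau> ` A \<subseteq> A"
  shows "(\<tau> ^^ i) a \<in> A" and "z ((\<tau> ^^ i) a) = (F ^^ i) (z a)"
proof -
  show in_A: "(\<tau> ^^ i) a \<in> A" for i
    using assms(2,3) by (induction i) auto
  show "z ((\<tau> ^^ i) a) = (F ^^ i) (z a)"
  proof (induction i)
    case (Suc i)
    have "F (z ((\<tau> ^^ i) a)) = z (\<tau> ((\<tau> ^^ i) a))"
      using assms(1) in_A by (simp add: intertwining_maps_def)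
    with Suc.IH show ?case
      by simp
  qed simp
qed

lemma funpow_eq_if_orbit_funpow_eq:
  assumes "permutation \<tau>" and "(F ^^ card (orbit \<tau> a)) x = x" and "(\<tau> ^^ i) a = (\<tau> ^^ k) a"
  shows "(F ^^ i) x = (F ^^ k) x"
proof -
  have "i mod card (orbit \<tau> a) = k mod card (orbit \<tau> a)"
    using assms(3) funpow_orbit_eq_iff_mod_card[OF assms(1)] by simp
  moreover have "(F ^^ (i mod card (orbit \<tau> a))) x = (F ^^ i) x"
    and "(F ^^ (k mod card (orbit \<tau> a))) x = (F ^^ k) x"
    using assms(2) by (rule funpow_mod_eq)+
  ultimately show ?thesis
    by simp
qed

lemma orbit_extension_in_intertwining_maps:
  assumes "permutation \<tau>" and x: "(F ^^ card (orbit \<tau> a)) x = x"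
  shows "(\<lambda>j\<in>orbit \<tau> a. (F ^^ funpow_dist \<tau> a j) x) \<in> intertwining_maps (orbit \<tau> a) \<tau> F"
proof -
  have "F ((F ^^ funpow_dist \<tau> a j) x) = (F ^^ funpow_dist \<tau> a (\<tau> j)) x" if j: "j \<in> orbit \<tau> a" for j
  proof -
    have "(\<tau> ^^ Suc (funpow_dist \<tau> a j)) a = (\<tau> ^^ funpow_dist \<tau> a (\<tau> j)) a"
      using funpow_dist_prop[OF j] funpow_dist_prop[OF orbit.step[OF j]] by simp
    hence "(F ^^ Suc (funpow_dist \<tau> a j)) x = (F ^^ funpow_dist \<tau> a (\<tau> j)) x"
      by (rule funpow_eq_if_orbit_funpow_eq[OF assms])
    thus ?thesis
      by simp
  qed
  thus ?thesis
    by (simp add: intertwining_maps_def orbit.step)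
qed

lemma card_intertwining_maps_orbit:
  assumes "permutation \<tau>"
  shows "card (intertwining_maps (orbit \<tau> a) \<tau> F) = card {x. (F ^^ card (orbit \<tau> a)) x = x}"
proof -
  define C where "C = orbit \<tau> a"
  have a: "a \<in> C"
    unfolding C_def using assms by (rule permutation_self_in_orbit)
  have closed: "\<tau> ` C \<subseteq> C"
    unfolding C_def by (rule image_subsetI) (rule orbit.step)
  note iterate = intertwining_maps_funpow(2)[OF _ a closed]
  have "bij_betw (\<lambda>z. z a) (intertwining_maps C \<tau> F) {x. (F ^^ card C) x = x}"
  proof (rule bij_betw_byWitness[where f' = "\<lambda>x. \<lambda>j\<in>C. (F ^^ funpow_dist \<tau> a j) x"])
    show "\<forall>z\<in>intertwining_maps C \<tau> F. (\<lambda>j\<in>C. (F ^^ funpow_dist \<tau> a j) (z a)) = z"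
    proof (intro ballI ext)
      fix z j
      assume z: "z \<in> intertwining_maps C \<tau> F"
      show "(\<lambda>j\<in>C. (F ^^ funpow_dist \<tau> a j) (z a)) j = z j"
      proof (cases "j \<in> C")
        case True
        have "z ((\<tau> ^^ funpow_dist \<tau> a j) a) = (F ^^ funpow_dist \<tau> a j) (z a)"
          using z by (rule iterate)
        with True show ?thesis
          by (simp add: C_def funpow_dist_prop)
      next
        case False
        with z show ?thesis
          by (simp add: intertwining_maps_def PiE_def extensional_def)
      qed
    qed
    show "\<forall>x\<in>{x. (F ^^ card C) x = x}. (\<lambda>j\<in>C. (F ^^ funpow_dist \<tau> a j) x) a = x"
      using a by (simp add: funpow_dist_0)
    have "(\<tau> ^^ card C) a = a"
      using funpow_orbit_eq_iff_mod_card[OF assms, of "card C" a 0] by (simp add: C_def)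
    show "(\<lambda>z. z a) ` intertwining_maps C \<tau> F \<subseteq> {x. (F ^^ card C) x = x}"
    proof (rule image_subsetI)
      fix z
      assume "z \<in> intertwining_maps C \<tau> F"
      hence "z ((\<tau> ^^ card C) a) = (F ^^ card C) (z a)"
        by (rule iterate)
      with \<open>(\<tau> ^^ card C) a = a\<close> show "z a \<in> {x. (F ^^ card C) x = x}"
        by simp
    qed
    show "(\<lambda>x. \<lambda>j\<in>C. (F ^^ funpow_dist \<tau> a j) x) ` {x. (F ^^ card C) x = x} \<subseteq> intertwining_maps C \<tau> F"
      unfolding C_def by (rule image_subsetI) (simp add: orbit_extension_in_intertwining_maps[OF assms])
  qed
  thus ?thesis
    unfolding C_def by (rule bij_betw_same_card)
qed

lemma card_intertwining_maps_remove_orbit: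
  assumes "finite A" and "\<tau> permutes A" and "a \<in> A"
  defines "C \<equiv> orbit \<tau> a"
  shows "perm_restrict \<tau> (A - C) permutes (A - C)"
    and "card (intertwining_maps A \<tau> F)
           = card (intertwining_maps C \<tau> F) * card (intertwining_maps (A - C) (perm_restrict \<tau> (A - C)) F)"
proof -
  have perm: "permutation \<tau>"
    using assms(1,2) by (auto simp: permutation_permutes)
  show restrict: "perm_restrict \<tau> (A - C) permutes (A - C)"
    unfolding C_def using assms(2) cyclic_on_orbit'[OF perm] by (rule perm_restrict_diff_cyclic)
  have "intertwining_maps (A - C) \<tau> F = intertwining_maps (A - C) (perm_restrict \<tau> (A - C)) F"
    by (rule intertwining_maps_cong) (simp add: perm_restrict_simps)
  moreover have "card (intertwining_maps A \<tau> F)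
      = card (intertwining_maps C \<tau> F) * card (intertwining_maps (A - C) \<tau> F)"
  proof (rule card_intertwining_maps_split)
    show "C \<subseteq> A"
      unfolding C_def using assms(2,3) by (rule permutes_orbit_subset)
    show "\<tau> j \<in> C" if "j \<in> C" for j
      using that unfolding C_def by (rule orbit.step)
    show "\<tau> j \<in> A - C" if "j \<in> A - C" for j
      using permutes_in_image[OF restrict, of j] that by (simp add: perm_restrict_simps)
  qed
  ultimately show "card (intertwining_maps A \<tau> F)
      = card (intertwining_maps C \<tau> F) * card (intertwining_maps (A - C) (perm_restrict \<tau> (A - C)) F)"
    by simp
qed

lemma card_intertwining_maps:
  assumes "finite A" and "\<tau> permutes A"
    and fixed_points: "\<And>m. m > 0 \<Longrightarrow> card {x. (F ^^ m) x = x} = Q ^ m"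
  shows "card (intertwining_maps A \<tau> F) = Q ^ card A"
  using assms(1,2)
proof (induction "card A" arbitrary: A \<tau> rule: less_induct)
  case less
  show ?case
  proof (cases "A = {}")
    case True
    thus ?thesis
      by (simp add: intertwining_maps_def)
  next
    case False
    then obtain a where a: "a \<in> A"
      by blast
    define C where "C = orbit \<tau> a"
    have perm: "permutation \<tau>"
      using less.prems by (auto simp: permutation_permutes)
    have "a \<in> C" and "C \<subseteq> A"
      unfolding C_def using perm permutes_orbit_subset[OF less.prems(2) a]
      by (auto intro: permutation_self_in_orbit)
    have "card C > 0"
      using \<open>a \<in> C\<close> \<open>C \<subseteq> A\<close> less.prems(1) by (auto simp: card_gt_0_iff intro: finite_subset)
    note split = card_intertwining_maps_remove_orbit[OF less.prems a, folded C_def]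
    have "card (A - C) < card A"
      using \<open>a \<in> C\<close> a less.prems(1) by (intro psubset_card_mono) auto
    moreover have "finite (A - C)"
      using less.prems(1) by simp
    ultimately have "card (intertwining_maps (A - C) (perm_restrict \<tau> (A - C)) F) = Q ^ card (A - C)"
      using split(1) by (rule less.hyps)
    moreover have "card (intertwining_maps C \<tau> F) = Q ^ card C"
      unfolding C_def card_intertwining_maps_orbit[OF perm] by (rule fixed_points) (use \<open>card C > 0\<close> C_def in simp)
    moreover have "card A = card C + card (A - C)"
      using \<open>C \<subseteq> A\<close> less.prems(1) by (simp add: card_Diff_subset card_mono finite_subset)
    ultimately show ?thesis
      by (simp add: split(2) power_add)
  qed
qed

section \<open>Counting root tuples\<close>

lemma monic_polys_finite: "finite (monic_polys n :: 'a::{finite,field} poly set)"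
proof -
  have "inj_on (\<lambda>p. restrict (coeff p) {..n}) (monic_polys n :: 'a poly set)"
  proof (rule inj_onI, rule poly_eqI)
    fix p r :: "'a poly" and k
    assume "p \<in> monic_polys n" "r \<in> monic_polys n" "restrict (coeff p) {..n} = restrict (coeff r) {..n}"
    thus "coeff p k = coeff r k"
      by (cases "k \<le> n") (metis atMost_iff restrict_apply', simp add: monic_polys_def coeff_eq_0)
  qed
  moreover have "(\<lambda>p. restrict (coeff p) {..n}) ` (monic_polys n :: 'a poly set) \<subseteq> PiE {..n} (\<lambda>_. UNIV)"
    by (rule image_subsetI, subst restrict_PiE_iff) simp
  ultimately show ?thesis
    by (metis finite_PiE finite_atMost finite_UNIV finite_imageD finite_subset)
qed

lemma root_tuples_finite:
  assumes "f \<in> monic_polys n"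
  shows "finite (root_tuples n f)"
proof -
  define R where "R = {x. poly (map_poly to_ac f) x = 0}"
  have "map_poly to_ac f \<noteq> 0"
    using assms by (auto simp: monic_polys_def map_poly_eq_0_iff)
  hence "finite R"
    unfolding R_def by (rule poly_roots_finite)
  moreover have "root_tuples n f \<subseteq> PiE {..<n} (\<lambda>_. R)"
  proof (rule subsetI, rule PiE_I)
    fix z j
    assume z: "z \<in> root_tuples n f" and j: "j \<in> {..<n}"
    have "poly (map_poly to_ac f) (z j) = (\<Prod>i<n. z j - z i)"
      using z by (simp add: root_tuples_def poly_prod)
    also have "\<dots> = 0"
      using j by (intro prod_zero) auto
    finally show "z j \<in> R"
      by (simp add: R_def)
  qed (auto simp: root_tuples_def)
  ultimately show ?thesis
    by (meson finite_PiE finite_lessThan finite_subset)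
qed

lemma map_poly_of_ac_to_ac: "map_poly of_ac (map_poly to_ac p) = (p :: 'a::field poly)"
  by (rule poly_eqI) (simp add: coeff_map_poly)

lemma root_tuples_determine_poly:
  assumes "z \<in> root_tuples n f" and "z \<in> root_tuples n g"
  shows "f = (g :: 'a::{finite,field} poly)"
proof -
  have "map_poly to_ac f = map_poly to_ac g"
    using assms by (simp add: root_tuples_def)
  hence "map_poly of_ac (map_poly to_ac f) = map_poly of_ac (map_poly to_ac g)"
    by (rule arg_cong)
  thus ?thesis
    by (simp only: map_poly_of_ac_to_ac)
qed

lemma delta_eq_indicator:
  assumes "z \<in> PiE {..<n} (\<lambda>_. UNIV)"
  shows "delta n \<sigma> (z :: nat \<Rightarrow> 'a::{finite,field} alg_closure) =
    (if z \<in> intertwining_maps {..<n} (inv_into UNIV \<sigma>) (\<lambda>x. x ^ card (UNIV :: 'a set)) then 1 else 0)"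
proof -
  have "(\<lambda>j\<in>{..<n}. z j ^ card (UNIV :: 'a set)) = perm_tuple n \<sigma> z \<longleftrightarrow>
        (\<forall>j\<in>{..<n}. z j ^ card (UNIV :: 'a set) = z (inv_into UNIV \<sigma> j))"
    unfolding perm_tuple_def by (auto simp: fun_eq_iff restrict_def split: if_splits)
  thus ?thesis
    using assms by (simp add: delta_def intertwining_maps_def)
qed

lemma intertwining_tuple_in_root_tuples:
  assumes "\<sigma> permutes {..<n}"
    and z: "z \<in> intertwining_maps {..<n} (inv_into UNIV \<sigma>) (\<lambda>x. x ^ card (UNIV :: 'a set))"
  shows "\<exists>f \<in> monic_polys n. z \<in> root_tuples n (f :: 'a::{finite,field} poly)"
proof -
  define P where "P = (\<Prod>i<n. [:- z i, 1:])"
  have "map_poly (\<lambda>x. x ^ card (UNIV :: 'a set)) P = (\<Prod>i<n. [:- (z i ^ card (UNIV :: 'a set)), 1:])"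
    unfolding P_def by (rule frobenius_map_poly_linear_factors)
  also have "\<dots> = (\<Prod>i<n. [:- z (inv_into UNIV \<sigma> i), 1:])"
    using z by (intro prod.cong) (auto simp: intertwining_maps_def)
  also have "\<dots> = P"
    unfolding P_def using permutes_imp_bij[OF permutes_inv[OF assms(1)]] by (rule prod.reindex_bij_betw)
  finally have P_eq: "map_poly to_ac (map_poly of_ac P) = P"
    by (rule frobenius_fixed_poly_descends)
  define f where "f = map_poly of_ac P"
  have "degree P = n" "lead_coeff P = 1"
    unfolding P_def by (subst degree_prod_eq_sum_degree; simp) (simp add: lead_coeff_prod)
  moreover have "degree (map_poly to_ac f) = degree f"
    by (rule degree_map_poly) simp
  ultimately have "degree f = n" "lead_coeff f = 1"
    using P_eq arg_cong[OF P_eq, of "\<lambda>p. coeff p n"] by (simp_all add: f_def coeff_map_poly)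
  moreover have "z \<in> root_tuples n f"
    using z P_eq by (simp add: root_tuples_def intertwining_maps_def f_def P_def)
  ultimately show ?thesis
    by (auto simp: monic_polys_def)
qed

lemma sum_delta_root_tuples:
  assumes "\<sigma> permutes {..<n}"
  shows "(\<Sum>f\<in>monic_polys n. \<Sum>z\<in>root_tuples n (f :: 'a::{finite,field} poly). delta n \<sigma> z)
           = real (card (UNIV :: 'a set)) ^ n"
proof -
  define S where "S = intertwining_maps {..<n} (inv_into UNIV \<sigma>) (\<lambda>x :: 'a alg_closure. x ^ card (UNIV :: 'a set))"
  have "(\<Sum>z\<in>root_tuples n f. delta n \<sigma> z) = real (card (root_tuples n f \<inter> S))"
    if "f \<in> monic_polys n" for f :: "'a poly"
  proof -
    have "(\<Sum>z\<in>root_tuples n f. delta n \<sigma> z) = (\<Sum>z\<in>root_tuples n f. if z \<in> S then 1 else 0)"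
      by (intro sum.cong refl) (simp add: delta_eq_indicator S_def root_tuples_def)
    also have "\<dots> = real (card (root_tuples n f \<inter> S))"
      using root_tuples_finite[OF that] by (simp add: sum.inter_restrict[symmetric])
    finally show ?thesis .
  qed
  hence "(\<Sum>f\<in>monic_polys n. \<Sum>z\<in>root_tuples n (f :: 'a poly). delta n \<sigma> z)
      = real (\<Sum>f\<in>monic_polys n. card (root_tuples n (f :: 'a poly) \<inter> S))"
    by simp
  also have "(\<Sum>f\<in>monic_polys n. card (root_tuples n (f :: 'a poly) \<inter> S))
      = card (\<Union>f\<in>monic_polys n. root_tuples n (f :: 'a poly) \<inter> S)"
    using monic_polys_finite root_tuples_finite
    by (intro card_UN_disjoint[symmetric]) (auto dest: root_tuples_determine_poly)
  also have "(\<Union>f\<in>monic_polys n. root_tuples n (f :: 'a poly) \<inter> S) = S"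
    using intertwining_tuple_in_root_tuples[OF assms] by (auto simp: S_def)
  also have "card S = card (UNIV :: 'a set) ^ card {..<n}"
    unfolding S_def using permutes_inv[OF assms]
    by (intro card_intertwining_maps) (simp_all add: funpow_power card_fixed_points_frobenius_power)
  finally show ?thesis
    by simp
qed

theorem proposition4p8:
  fixes n :: nat and \<phi> :: "('a::{finite,field}) poly \<Rightarrow> real" and c :: "(nat \<Rightarrow> nat) \<Rightarrow> real"
  assumes "n \<ge> 1"
    and "von_mangoldt_type n \<phi> c"
  shows "(\<Sum>f\<in>monic_polys n. \<phi> f) =
         (\<Sum>\<sigma>\<in>{\<sigma>. \<sigma> permutes {..<n}}. c \<sigma> * real (card (UNIV :: 'a set)) ^ n)"
proof -
  have "(\<Sum>f\<in>monic_polys n. \<phi> f) =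
      (\<Sum>f\<in>monic_polys n. \<Sum>z\<in>root_tuples n (f :: 'a poly). \<Sum>\<sigma>\<in>{\<sigma>. \<sigma> permutes {..<n}}. c \<sigma> * delta n \<sigma> z)"
    using assms(2) unfolding von_mangoldt_type_def by (intro sum.cong) auto
  also have "\<dots> = (\<Sum>\<sigma>\<in>{\<sigma>. \<sigma> permutes {..<n}}. c \<sigma> *
      (\<Sum>f\<in>monic_polys n. \<Sum>z\<in>root_tuples n (f :: 'a poly). delta n \<sigma> z))"
    by (simp add: sum_distrib_left sum.swap[where A = "root_tuples n _"] sum.swap[where A = "monic_polys n"])
  also have "\<dots> = (\<Sum>\<sigma>\<in>{\<sigma>. \<sigma> permutes {..<n}}. c \<sigma> * real (card (UNIV :: 'a set)) ^ n)"
    by (intro sum.cong refl) (simp add: sum_delta_root_tuples)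
  finally show ?thesis .
qed

end
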